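(* Let $K$ be a field of characteristic zero, $x=(x_1,\dots,x_n)$, and let $f,h\in K[x]$ with $\deg(f-h)=1$. If there exists a vector $v\in K^n$ such that $\mathcal{J}h\cdot v=0\neq\mathcal{J}f\cdot v$, then $f$ is a tame coordinate.
   Context: $\mathcal{J}h=(\partial h/\partial x_1,\dots,\partial h/\partial x_n)$ is the Jacobian (row vector). A polynomial $f$ is a tame coordinate if it is a component of a tame automorphism, i.e. of an invertible polynomial map that is a composition of invertible linear (affine) maps and elementary maps $(x_1+p(x_2,\dots,x_n),x_2,\dots,x_n)$. *)

theory Defs
  imports "HOL-Library.Poly_Mapping"
begin

text \<open>Multivariate polynomials over 'a: finitely supported maps from monomials
(exponent vectors, nat-to-nat finitely supported, variable i has index i) to coefficients.
The ring K[x_1,...,x_n] is represented by the polynomials only involving the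
variables with indices 0,...,n-1.\<close>

type_synonym 'a mpoly = "(nat \<Rightarrow>\<^sub>0 nat) \<Rightarrow>\<^sub>0 'a"

definition Var :: "nat \<Rightarrow> 'a::comm_ring_1 mpoly" where
  "Var i = Poly_Mapping.single (Poly_Mapping.single i 1) 1"

definition Const :: "'a::comm_ring_1 \<Rightarrow> 'a mpoly" where
  "Const c = Poly_Mapping.single 0 c"

definition vars_in :: "nat set \<Rightarrow> 'a::comm_ring_1 mpoly \<Rightarrow> bool" where
  "vars_in S p \<longleftrightarrow> (\<forall>m\<in>Poly_Mapping.keys p. Poly_Mapping.keys m \<subseteq> S)"

definition mon_deg :: "(nat \<Rightarrow>\<^sub>0 nat) \<Rightarrow> nat" where
  "mon_deg m = (\<Sum>i\<in>Poly_Mapping.keys m. Poly_Mapping.lookup m i)"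

text \<open>Total degree (the zero polynomial gets 0 here; it never has degree 1).\<close>
definition total_degree :: "'a::comm_ring_1 mpoly \<Rightarrow> nat" where
  "total_degree p = Max (insert 0 (mon_deg ` Poly_Mapping.keys p))"

definition pderiv_mp :: "nat \<Rightarrow> 'a::comm_ring_1 mpoly \<Rightarrow> 'a mpoly" where
  "pderiv_mp i p = (\<Sum>m\<in>Poly_Mapping.keys p.
      Poly_Mapping.single (m - Poly_Mapping.single i 1) (of_nat (Poly_Mapping.lookup m i) * Poly_Mapping.lookup p m))"

text \<open>Jacobian row vector of p (in n variables) applied to the column vector v:
  (Jp) v = sum_i v_i * dp/dx_i.\<close>
definition jac_apply :: "nat \<Rightarrow> 'a::comm_ring_1 mpoly \<Rightarrow> (nat \<Rightarrow> 'a) \<Rightarrow> 'a mpoly" where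
  "jac_apply n p v = (\<Sum>i<n. Const (v i) * pderiv_mp i p)"

definition subst :: "(nat \<Rightarrow> 'a::comm_ring_1 mpoly) \<Rightarrow> 'a mpoly \<Rightarrow> 'a mpoly" where
  "subst s p = (\<Sum>m\<in>Poly_Mapping.keys p. Const (Poly_Mapping.lookup p m) * (\<Prod>i\<in>Poly_Mapping.keys m. s i ^ Poly_Mapping.lookup m i))"

text \<open>Polynomial maps K^n \<rightarrow> K^n are given by their components F 0, ..., F (n-1);
components with index \<ge> n are normalised to the identity.
comp_map n F G is the map F \<circ> G, i.e. (F \<circ> G)_i = F_i(G_0,...,G_(n-1)).\<close>
definition comp_map :: "nat \<Rightarrow> (nat \<Rightarrow> 'a::comm_ring_1 mpoly) \<Rightarrow> (nat \<Rightarrow> 'a mpoly) \<Rightarrow> (nat \<Rightarrow> 'a mpoly)" where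
  "comp_map n F G = (\<lambda>i. if i < n then subst G (F i) else Var i)"

definition affine_aut :: "nat \<Rightarrow> (nat \<Rightarrow> 'a::field mpoly) \<Rightarrow> bool" where
  "affine_aut n F \<longleftrightarrow> (\<exists>A B :: nat \<Rightarrow> nat \<Rightarrow> 'a. \<exists>b :: nat \<Rightarrow> 'a.
      (\<forall>i<n. \<forall>j<n. (\<Sum>k<n. A i k * B k j) = (if i = j then 1 else 0)) \<and>
      (\<forall>i<n. \<forall>j<n. (\<Sum>k<n. B i k * A k j) = (if i = j then 1 else 0)) \<and>
      F = (\<lambda>i. if i < n then (\<Sum>j<n. Const (A i j) * Var j) + Const (b i) else Var i))"

text \<open>Elementary maps (x_1 + p(x_2,...,x_n), x_2, ..., x_n); with 0-based indices
the first variable is x_0 and p involves only x_1, ..., x_(n-1).\<close>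
definition elementary_aut :: "nat \<Rightarrow> (nat \<Rightarrow> 'a::field mpoly) \<Rightarrow> bool" where
  "elementary_aut n F \<longleftrightarrow> 0 < n \<and> (\<exists>p. vars_in {1..<n} p \<and>
      F = (\<lambda>i. if i = 0 then Var 0 + p else Var i))"

inductive tame_aut :: "nat \<Rightarrow> (nat \<Rightarrow> 'a::field mpoly) \<Rightarrow> bool" for n where
  affine: "affine_aut n F \<Longrightarrow> tame_aut n F"
| elementary: "elementary_aut n F \<Longrightarrow> tame_aut n F"
| comp: "tame_aut n F \<Longrightarrow> tame_aut n G \<Longrightarrow> tame_aut n (comp_map n F G)"

definition tame_coordinate :: "nat \<Rightarrow> 'a::field mpoly \<Rightarrow> bool" where
  "tame_coordinate n f \<longleftrightarrow> (\<exists>F i. tame_aut n F \<and> i < n \<and> F i = f)"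

end

theory Submission
  imports Defs "HOL-Combinatorics.Transposition"
begin

text \<open>Write \<open>f = h + d\<close>. As \<open>deg d = 1\<close>, \<open>d = c + \<Sum> a\<^sub>i x\<^sub>i\<close> is affine, so
\<open>Jf\<cdot>v = Jh\<cdot>v + \<Sum> a\<^sub>i v\<^sub>i = s\<close> is a nonzero constant. Complete \<open>w = v/s\<close> to an invertible
matrix \<open>B\<close> with first column \<open>w\<close>. By the chain rule \<open>\<partial>(h\<circ>B)/\<partial>x\<^sub>0 = (Jh\<cdot>w)\<circ>B = 0\<close>,
so in characteristic zero \<open>h\<circ>B\<close> does not involve \<open>x\<^sub>0\<close>, while \<open>d\<circ>B = x\<^sub>0 + r\<close> with
\<open>r\<close> free of \<open>x\<^sub>0\<close>. Hence \<open>f\<circ>B = x\<^sub>0 + p\<close> with \<open>p\<close> free of \<open>x\<^sub>0\<close> is the first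
component of an elementary map \<open>E\<close>, and \<open>f\<close> is the first component of the tame map
\<open>E\<circ>B\<^sup>-\<^sup>1\<close>.\<close>

lemma poly_mapping_sum_single:
  fixes f :: "'a \<Rightarrow>\<^sub>0 'b::comm_monoid_add"
  shows "f = (\<Sum>k\<in>Poly_Mapping.keys f. Poly_Mapping.single k (Poly_Mapping.lookup f k))"
  by (rule poly_mapping_eqI) (auto simp: lookup_sum lookup_single when_def in_keys_iff)

lemma poly_mapping_sum_single_superset:
  fixes f :: "'a \<Rightarrow>\<^sub>0 'b::comm_monoid_add"
  assumes "finite M" "Poly_Mapping.keys f \<subseteq> M"
  shows "f = (\<Sum>k\<in>M. Poly_Mapping.single k (Poly_Mapping.lookup f k))"
proof -
  have "(\<Sum>k\<in>M. Poly_Mapping.single k (Poly_Mapping.lookup f k)) =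
      (\<Sum>k\<in>Poly_Mapping.keys f. Poly_Mapping.single k (Poly_Mapping.lookup f k))"
    by (rule sum.mono_neutral_right[OF assms]) (auto simp: in_keys_iff)
  then show ?thesis
    using poly_mapping_sum_single[of f] by simp
qed

lemma mult_eq_sum_single_mult:
  fixes p q :: "'a::comm_ring_1 mpoly"
  shows "p * q = (\<Sum>a\<in>Poly_Mapping.keys p. \<Sum>b\<in>Poly_Mapping.keys q.
    Poly_Mapping.single a (Poly_Mapping.lookup p a) * Poly_Mapping.single b (Poly_Mapping.lookup q b))"
  by (simp only: sum_product[symmetric] poly_mapping_sum_single[symmetric])

lemma Const_0 [simp]: "Const 0 = 0"
  by (simp add: Const_def)

lemma Const_1 [simp]: "Const 1 = 1"
  by (simp add: Const_def)

lemma Const_add: "Const (a + b) = Const a + Const b"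
  by (simp add: Const_def single_add)

lemma Const_mult: "Const a * Const b = Const (a * b)"
  by (simp add: Const_def mult_single)

lemma Const_sum: "Const (\<Sum>i\<in>A. f i) = (\<Sum>i\<in>A. Const (f i))"
  by (induction A rule: infinite_finite_induct) (simp_all add: Const_add)

lemma Var_power: "Var i ^ k = Poly_Mapping.single (Poly_Mapping.single i k) 1"
  by (induction k) (simp_all add: Var_def mult_single single_add[symmetric] add.commute)

lemma single_eq_Const_mult_prod_Var:
  "Poly_Mapping.single m c = Const c * (\<Prod>i\<in>Poly_Mapping.keys m. Var i ^ Poly_Mapping.lookup m i)"
proof -
  have prod_single: "(\<Prod>i\<in>A. Poly_Mapping.single (g i) (1::'a)) = Poly_Mapping.single (\<Sum>i\<in>A. g i) 1" for A g
    by (induction A rule: infinite_finite_induct) (simp_all add: mult_single)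
  show ?thesis
    by (simp add: Var_power prod_single poly_mapping_sum_single[of m, symmetric] Const_def mult_single)
qed

lemma mpoly_induct [consumes 1, case_names Const Var add mult]:
  assumes "vars_in S p"
    and Const: "\<And>c. P (Const c)"
    and Var: "\<And>i. i \<in> S \<Longrightarrow> P (Var i)"
    and add: "\<And>p q. P p \<Longrightarrow> P q \<Longrightarrow> P (p + q)"
    and mult: "\<And>p q. P p \<Longrightarrow> P q \<Longrightarrow> P (p * q)"
  shows "P p"
proof -
  have one: "P 1"
    using Const[of 1] by simp
  have prod_Var: "P (\<Prod>i\<in>K. Var i ^ g i)" if "finite K" "K \<subseteq> S" for K g
    using that
  proof (induction K rule: finite_induct)
    case (insert x K)
    have "P (Var x ^ k)" for k
      by (induction k) (use one mult Var insert.prems in auto)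
    then show ?case
      using insert by (simp add: mult)
  qed (simp add: one)
  have single: "P (Poly_Mapping.single m c)" if "m \<in> Poly_Mapping.keys p" for m c
    unfolding single_eq_Const_mult_prod_Var
    using assms(1) that by (intro mult Const prod_Var) (auto simp: vars_in_def)
  have "P (\<Sum>m\<in>K. Poly_Mapping.single m (Poly_Mapping.lookup p m))"
    if "finite K" "K \<subseteq> Poly_Mapping.keys p" for K
    using that by (induction K rule: finite_induct) (use Const[of 0] single add in auto)
  then show ?thesis
    by (subst poly_mapping_sum_single) simp
qed

definition subst_monom :: "(nat \<Rightarrow> 'a::comm_ring_1 mpoly) \<Rightarrow> (nat \<Rightarrow>\<^sub>0 nat) \<Rightarrow> 'a mpoly" where
  "subst_monom s m = (\<Prod>i\<in>Poly_Mapping.keys m. s i ^ Poly_Mapping.lookup m i)"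

lemma subst_monom_superset:
  assumes "finite K" "Poly_Mapping.keys m \<subseteq> K"
  shows "subst_monom s m = (\<Prod>i\<in>K. s i ^ Poly_Mapping.lookup m i)"
  unfolding subst_monom_def
  by (rule prod.mono_neutral_left[OF assms]) (auto simp: in_keys_iff)

lemma subst_monom_add: "subst_monom s (a + b) = subst_monom s a * subst_monom s b"
proof -
  let ?K = "Poly_Mapping.keys a \<union> Poly_Mapping.keys b"
  have "subst_monom s (a + b) = (\<Prod>i\<in>?K. s i ^ Poly_Mapping.lookup (a + b) i)"
    by (rule subst_monom_superset) (simp_all add: keys_add)
  also have "\<dots> = (\<Prod>i\<in>?K. s i ^ Poly_Mapping.lookup a i) * (\<Prod>i\<in>?K. s i ^ Poly_Mapping.lookup b i)"
    by (simp add: lookup_add power_add prod.distrib)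
  also have "\<dots> = subst_monom s a * subst_monom s b"
    by (simp add: subst_monom_superset[of ?K a] subst_monom_superset[of ?K b])
  finally show ?thesis .
qed

lemma subst_superset:
  assumes "finite M" "Poly_Mapping.keys p \<subseteq> M"
  shows "subst s p = (\<Sum>m\<in>M. Const (Poly_Mapping.lookup p m) * subst_monom s m)"
  unfolding subst_def subst_monom_def
  by (rule sum.mono_neutral_left[OF assms]) (auto simp: in_keys_iff)

lemma subst_single: "subst s (Poly_Mapping.single m c) = Const c * subst_monom s m"
  by (simp add: subst_superset[of "{m}"])

lemma subst_0 [simp]: "subst s 0 = 0"
  by (simp add: subst_def)

lemma subst_add: "subst s (p + q) = subst s p + subst s q"
proof -
  let ?M = "Poly_Mapping.keys p \<union> Poly_Mapping.keys q"
  have "subst s (p + q) = (\<Sum>m\<in>?M. Const (Poly_Mapping.lookup (p + q) m) * subst_monom s m)"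
    by (rule subst_superset) (simp_all add: keys_add)
  also have "\<dots> = subst s p + subst s q"
    by (simp add: subst_superset[of ?M] lookup_add Const_add distrib_right sum.distrib)
  finally show ?thesis .
qed

lemma subst_sum: "subst s (\<Sum>i\<in>A. f i) = (\<Sum>i\<in>A. subst s (f i))"
  by (induction A rule: infinite_finite_induct) (simp_all add: subst_add)

lemma subst_mult: "subst s (p * q) = subst s p * subst s q"
proof -
  have "subst s (p * q) = (\<Sum>a\<in>Poly_Mapping.keys p. \<Sum>b\<in>Poly_Mapping.keys q.
      Const (Poly_Mapping.lookup p a) * subst_monom s a * (Const (Poly_Mapping.lookup q b) * subst_monom s b))"
    by (subst mult_eq_sum_single_mult)
      (simp add: subst_sum mult_single subst_single subst_monom_add Const_mult[symmetric] mult_ac)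
  also have "\<dots> = subst s p * subst s q"
    by (simp add: subst_def subst_monom_def sum_product)
  finally show ?thesis .
qed

lemma subst_Const [simp]: "subst s (Const c) = Const c"
  by (simp add: Const_def subst_single subst_monom_def)

lemma subst_Var [simp]: "subst s (Var i) = s i"
  by (simp add: Var_def subst_single subst_monom_def)

lemma subst_subst: "subst s (subst t p) = subst (\<lambda>i. subst s (t i)) p"
proof -
  have "vars_in UNIV p"
    by (simp add: vars_in_def)
  then show ?thesis
    by (induction rule: mpoly_induct) (simp_all add: subst_add subst_mult)
qed

lemma subst_eq_self:
  assumes "vars_in S p" "\<And>i. i \<in> S \<Longrightarrow> s i = Var i"
  shows "subst s p = p"
  using assms(1) by (induction rule: mpoly_induct) (simp_all add: subst_add subst_mult assms(2))

lemma single_add_minus_single: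
  "Poly_Mapping.lookup m i \<noteq> 0 \<Longrightarrow> m - Poly_Mapping.single i 1 + Poly_Mapping.single i (1::nat) = m"
  by (rule poly_mapping_eqI) (auto simp: lookup_add lookup_minus lookup_single when_def)

lemma lookup_pderiv:
  "Poly_Mapping.lookup (pderiv_mp i p) u =
    of_nat (Poly_Mapping.lookup u i + 1) * Poly_Mapping.lookup p (u + Poly_Mapping.single i 1)"
proof -
  let ?e = "Poly_Mapping.single i (1::nat)"
  have "Poly_Mapping.lookup (pderiv_mp i p) u = (\<Sum>m\<in>Poly_Mapping.keys p.
      if m - ?e = u then of_nat (Poly_Mapping.lookup m i) * Poly_Mapping.lookup p m else 0)"
    unfolding pderiv_mp_def lookup_sum lookup_single when_def by simp
  also have "\<dots> = (\<Sum>m\<in>Poly_Mapping.keys p.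
      if m = u + ?e then of_nat (Poly_Mapping.lookup u i + 1) * Poly_Mapping.lookup p m else 0)"
  proof (rule sum.cong[OF refl])
    fix m
    have "Poly_Mapping.lookup m i = 0" if "m - ?e = u" "m \<noteq> u + ?e"
      using single_add_minus_single[of m i] that by auto
    then show "(if m - ?e = u then of_nat (Poly_Mapping.lookup m i) * Poly_Mapping.lookup p m else 0) =
        (if m = u + ?e then of_nat (Poly_Mapping.lookup u i + 1) * Poly_Mapping.lookup p m else 0)"
      by (auto simp: lookup_add)
  qed
  also have "\<dots> = of_nat (Poly_Mapping.lookup u i + 1) * Poly_Mapping.lookup p (u + ?e)"
    by (simp add: in_keys_iff)
  finally show ?thesis .
qed

lemma pderiv_single:
  "pderiv_mp i (Poly_Mapping.single m c) =
    Poly_Mapping.single (m - Poly_Mapping.single i 1) (of_nat (Poly_Mapping.lookup m i) * c)"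
  by (cases "c = 0") (simp_all add: pderiv_mp_def)

lemma pderiv_0 [simp]: "pderiv_mp i 0 = 0"
  by (simp add: pderiv_mp_def)

lemma pderiv_add: "pderiv_mp i (p + q) = pderiv_mp i p + pderiv_mp i q"
  by (rule poly_mapping_eqI) (simp add: lookup_pderiv lookup_add distrib_left)

lemma pderiv_sum: "pderiv_mp i (\<Sum>k\<in>A. f k) = (\<Sum>k\<in>A. pderiv_mp i (f k))"
  by (induction A rule: infinite_finite_induct) (simp_all add: pderiv_add)

lemma pderiv_Const [simp]: "pderiv_mp i (Const c) = 0"
  by (simp add: Const_def pderiv_single)

lemma pderiv_Var: "pderiv_mp j (Var i) = Const (if i = j then 1 else 0)"
  by (simp add: Var_def Const_def pderiv_single lookup_single)

lemma pderiv_single_mult: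
  "pderiv_mp i (Poly_Mapping.single a c * Poly_Mapping.single b d) =
    pderiv_mp i (Poly_Mapping.single a c) * Poly_Mapping.single b d +
    Poly_Mapping.single a c * pderiv_mp i (Poly_Mapping.single b d)"
proof -
  let ?e = "Poly_Mapping.single i (1::nat)"
  have left: "Poly_Mapping.single (a - ?e + b) (of_nat (Poly_Mapping.lookup a i) * c * d) =
      Poly_Mapping.single (a + b - ?e) (of_nat (Poly_Mapping.lookup a i) * c * d)"
  proof (cases "Poly_Mapping.lookup a i = 0")
    case False
    then have "a - ?e + b = a + b - ?e"
      by (intro poly_mapping_eqI) (auto simp: lookup_minus lookup_add lookup_single when_def)
    then show ?thesis by simp
  qed simp
  have right: "Poly_Mapping.single (a + (b - ?e)) (c * (of_nat (Poly_Mapping.lookup b i) * d)) =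
      Poly_Mapping.single (a + b - ?e) (of_nat (Poly_Mapping.lookup b i) * c * d)"
  proof (cases "Poly_Mapping.lookup b i = 0")
    case False
    then have "a + (b - ?e) = a + b - ?e"
      by (intro poly_mapping_eqI) (auto simp: lookup_minus lookup_add lookup_single when_def)
    then show ?thesis by (simp add: mult_ac)
  qed simp
  show ?thesis
    unfolding mult_single pderiv_single left right
    by (simp add: lookup_add single_add[symmetric] algebra_simps)
qed

lemma pderiv_mult: "pderiv_mp i (p * q) = pderiv_mp i p * q + p * pderiv_mp i q"
proof -
  let ?p = "\<lambda>a. Poly_Mapping.single a (Poly_Mapping.lookup p a)"
  let ?q = "\<lambda>b. Poly_Mapping.single b (Poly_Mapping.lookup q b)"
  have "pderiv_mp i p * q = (\<Sum>a\<in>Poly_Mapping.keys p. \<Sum>b\<in>Poly_Mapping.keys q. pderiv_mp i (?p a) * ?q b)"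
    by (subst (1 2) poly_mapping_sum_single) (simp only: pderiv_sum sum_product)
  moreover have "p * pderiv_mp i q = (\<Sum>a\<in>Poly_Mapping.keys p. \<Sum>b\<in>Poly_Mapping.keys q. ?p a * pderiv_mp i (?q b))"
    by (subst (1 2) poly_mapping_sum_single) (simp only: pderiv_sum sum_product)
  ultimately show ?thesis
    by (subst mult_eq_sum_single_mult) (simp only: pderiv_sum pderiv_single_mult sum.distrib)
qed

lemma vars_in_mono: "vars_in S p \<Longrightarrow> S \<subseteq> T \<Longrightarrow> vars_in T p"
  unfolding vars_in_def by blast

lemma vars_in_0: "vars_in S 0"
  by (simp add: vars_in_def)

lemma vars_in_Const: "vars_in S (Const c)"
  by (simp add: vars_in_def Const_def)

lemma vars_in_Var: "i \<in> S \<Longrightarrow> vars_in S (Var i)"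
  by (simp add: vars_in_def Var_def)

lemma vars_in_add:
  assumes "vars_in S p" "vars_in S q"
  shows "vars_in S (p + q)"
  unfolding vars_in_def
proof
  fix m assume "m \<in> Poly_Mapping.keys (p + q)"
  then have "m \<in> Poly_Mapping.keys p \<union> Poly_Mapping.keys q"
    by (rule subsetD[OF keys_add])
  with assms show "Poly_Mapping.keys m \<subseteq> S"
    unfolding vars_in_def by blast
qed

lemma vars_in_diff:
  assumes "vars_in S p" "vars_in S q"
  shows "vars_in S (p - q)"
  unfolding vars_in_def
proof
  fix m assume "m \<in> Poly_Mapping.keys (p - q)"
  then have "m \<in> Poly_Mapping.keys p \<union> Poly_Mapping.keys q"
    by (rule subsetD[OF keys_diff])
  with assms show "Poly_Mapping.keys m \<subseteq> S"
    unfolding vars_in_def by blast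
qed

lemma vars_in_mult:
  assumes "vars_in S p" "vars_in S q"
  shows "vars_in S (p * q)"
  unfolding vars_in_def
proof
  fix m assume "m \<in> Poly_Mapping.keys (p * q)"
  then obtain a b where "m = a + b" "a \<in> Poly_Mapping.keys p" "b \<in> Poly_Mapping.keys q"
    using subsetD[OF keys_mult] by blast
  moreover have "Poly_Mapping.keys (a + b) \<subseteq> Poly_Mapping.keys a \<union> Poly_Mapping.keys b"
    by (rule keys_add)
  ultimately show "Poly_Mapping.keys m \<subseteq> S"
    using assms unfolding vars_in_def by blast
qed

lemma vars_in_sum: "(\<And>k. k \<in> A \<Longrightarrow> vars_in S (f k)) \<Longrightarrow> vars_in S (\<Sum>k\<in>A. f k)"
  by (induction A rule: infinite_finite_induct) (simp_all add: vars_in_0 vars_in_add)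

lemma vars_in_subst:
  assumes "vars_in T p" "\<And>i. i \<in> T \<Longrightarrow> vars_in S (t i)"
  shows "vars_in S (subst t p)"
  using assms(1)
  by (induction rule: mpoly_induct)
    (simp_all add: subst_add subst_mult vars_in_add vars_in_mult vars_in_Const assms(2))

lemma pderiv_subst:
  assumes "vars_in {..<n} q"
  shows "pderiv_mp j (subst s q) = (\<Sum>i<n. subst s (pderiv_mp i q) * pderiv_mp j (s i))"
  using assms
proof (induction rule: mpoly_induct)
  case (Var i)
  have "(\<Sum>l<n. subst s (pderiv_mp l (Var i)) * pderiv_mp j (s l)) =
      (\<Sum>l<n. if l = i then pderiv_mp j (s l) else 0)"
    by (rule sum.cong) (auto simp: pderiv_Var)
  with Var show ?case
    by simp
next
  case (add p q)
  then show ?case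
    by (simp add: subst_add pderiv_add distrib_right sum.distrib)
next
  case (mult p q)
  let ?D = "\<lambda>r. \<Sum>i<n. subst s (pderiv_mp i r) * pderiv_mp j (s i)"
  have "?D (p * q) = (\<Sum>i<n. subst s (pderiv_mp i p) * pderiv_mp j (s i) * subst s q +
      subst s p * (subst s (pderiv_mp i q) * pderiv_mp j (s i)))"
    by (rule sum.cong[OF refl]) (simp only: pderiv_mult subst_add subst_mult algebra_simps)
  also have "\<dots> = ?D p * subst s q + subst s p * ?D q"
    by (simp only: sum.distrib sum_distrib_left sum_distrib_right)
  finally show ?case
    using mult by (simp only: subst_mult pderiv_mult)
qed simp

lemma vars_in_Diff_if_pderiv_eq_0:
  fixes g :: "'a::field_char_0 mpoly"
  assumes "vars_in S g" "pderiv_mp i g = 0"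
  shows "vars_in (S - {i}) g"
  unfolding vars_in_def
proof
  fix m assume m: "m \<in> Poly_Mapping.keys g"
  have "Poly_Mapping.lookup m i = 0"
  proof (rule ccontr)
    assume "Poly_Mapping.lookup m i \<noteq> 0"
    then have "m - Poly_Mapping.single i 1 + Poly_Mapping.single i 1 = m"
      by (rule single_add_minus_single)
    then have "Poly_Mapping.lookup (pderiv_mp i g) (m - Poly_Mapping.single i 1) \<noteq> 0"
      using m by (simp add: lookup_pderiv in_keys_iff del: of_nat_Suc)
    with assms(2) show False
      by simp
  qed
  then show "Poly_Mapping.keys m \<subseteq> S - {i}"
    using assms(1) m by (auto simp: vars_in_def in_keys_iff)
qed

lemma jac_apply_add: "jac_apply n (p + q) v = jac_apply n p v + jac_apply n q v"
  by (simp add: jac_apply_def pderiv_add distrib_left sum.distrib)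

lemma jac_apply_scale: "jac_apply n p (\<lambda>i. c * v i) = Const c * jac_apply n p v"
  by (simp add: jac_apply_def sum_distrib_left Const_mult[symmetric] mult.assoc)

lemma jac_apply_cong: "(\<And>i. i < n \<Longrightarrow> v i = w i) \<Longrightarrow> jac_apply n p v = jac_apply n p w"
  by (simp add: jac_apply_def)

lemma jac_apply_affine:
  "jac_apply n (Const c + (\<Sum>i<n. Const (a i) * Var i)) v = Const (\<Sum>i<n. a i * v i)"
proof -
  have "pderiv_mp j (Const (a i) * Var i) = (if i = j then Const (a i) else 0)" for i j
    by (simp add: pderiv_mult pderiv_Var)
  then have "pderiv_mp j (\<Sum>i<n. Const (a i) * Var i) = Const (a j)" if "j < n" for j
    using that by (simp add: pderiv_sum)
  then show ?thesis
    by (simp add: jac_apply_def pderiv_add Const_mult Const_sum mult.commute)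
qed

lemma mon_deg_le_1:
  assumes "mon_deg m \<le> 1"
  shows "m = 0 \<or> (\<exists>i. m = Poly_Mapping.single i 1)"
proof (cases "m = 0")
  case False
  then obtain i where i: "i \<in> Poly_Mapping.keys m"
    using keys_eq_empty by blast
  have pos: "Poly_Mapping.lookup m l \<ge> 1" if "l \<in> Poly_Mapping.keys m" for l
    using that by (simp add: in_keys_iff)
  have keys: "Poly_Mapping.keys m = {i}"
  proof (rule ccontr)
    assume "Poly_Mapping.keys m \<noteq> {i}"
    then obtain l where l: "l \<in> Poly_Mapping.keys m" "l \<noteq> i"
      using i by blast
    have "2 \<le> (\<Sum>x\<in>{i, l}. Poly_Mapping.lookup m x)"
      using l pos[OF i] pos[OF l(1)] by simp
    also have "\<dots> \<le> mon_deg m"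
      unfolding mon_deg_def by (rule sum_mono2) (use i l in auto)
    finally show False
      using assms by simp
  qed
  then have "Poly_Mapping.lookup m i = 1"
    using assms pos[OF i] by (simp add: mon_deg_def)
  with keys have "m = Poly_Mapping.single i 1"
    by (intro poly_mapping_eqI) (auto simp: lookup_single when_def in_keys_iff)
  then show ?thesis
    by blast
qed simp

lemma total_degree_le_1_imp_affine:
  assumes "vars_in {..<n} d" "total_degree d \<le> 1"
  shows "d = Const (Poly_Mapping.lookup d 0) +
    (\<Sum>i<n. Const (Poly_Mapping.lookup d (Poly_Mapping.single i 1)) * Var i)"
proof -
  let ?e = "\<lambda>i::nat. Poly_Mapping.single i (1::nat)"
  have deg_le: "mon_deg m \<le> total_degree d" if "m \<in> Poly_Mapping.keys d" for m
    unfolding total_degree_def using that by (intro Max_ge) auto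
  have "m \<in> insert 0 (?e ` {..<n})" if "m \<in> Poly_Mapping.keys d" for m
  proof -
    from that assms have "mon_deg m \<le> 1" "Poly_Mapping.keys m \<subseteq> {..<n}"
      using deg_le[OF that] by (auto simp: vars_in_def)
    then show ?thesis
      using mon_deg_le_1 by fastforce
  qed
  then have "Poly_Mapping.keys d \<subseteq> insert 0 (?e ` {..<n})"
    by blast
  then have "d = (\<Sum>m\<in>insert 0 (?e ` {..<n}). Poly_Mapping.single m (Poly_Mapping.lookup d m))"
    by (rule poly_mapping_sum_single_superset[rotated]) simp
  also have "\<dots> = Poly_Mapping.single 0 (Poly_Mapping.lookup d 0) +
      (\<Sum>i<n. Poly_Mapping.single (?e i) (Poly_Mapping.lookup d (?e i)))"
  proof -
    have "inj ?e"
      by (rule injI) (simp add: poly_mapping_eq_iff fun_eq_iff lookup_single when_def split: if_splits)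
    moreover have "0 \<notin> ?e ` {..<n}"
    proof
      assume "0 \<in> ?e ` {..<n}"
      then obtain i where "0 = ?e i"
        by blast
      then have "Poly_Mapping.lookup (?e i) i = 0"
        by simp
      then show False
        by simp
    qed
    ultimately show ?thesis
      by (simp only: sum.insert[OF finite_imageI[OF finite_lessThan] \<open>0 \<notin> ?e ` {..<n}\<close>]
          sum.reindex[OF inj_on_subset[OF \<open>inj ?e\<close> subset_UNIV]] comp_def)
  qed
  finally show ?thesis
    by (simp add: Const_def Var_def mult_single)
qed

definition linear_poly_map :: "nat \<Rightarrow> (nat \<Rightarrow> nat \<Rightarrow> 'a::comm_ring_1) \<Rightarrow> nat \<Rightarrow> 'a mpoly" where
  "linear_poly_map n A = (\<lambda>i. if i < n then \<Sum>j<n. Const (A i j) * Var j else Var i)"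

definition inverse_matrices :: "nat \<Rightarrow> (nat \<Rightarrow> nat \<Rightarrow> 'a::comm_ring_1) \<Rightarrow> (nat \<Rightarrow> nat \<Rightarrow> 'a) \<Rightarrow> bool" where
  "inverse_matrices n A B \<longleftrightarrow>
    (\<forall>i<n. \<forall>j<n. (\<Sum>k<n. A i k * B k j) = (if i = j then 1 else 0)) \<and>
    (\<forall>i<n. \<forall>j<n. (\<Sum>k<n. B i k * A k j) = (if i = j then 1 else 0))"

lemma affine_aut_linear_poly_map:
  "inverse_matrices n A B \<Longrightarrow> affine_aut n (linear_poly_map n A)"
  unfolding affine_aut_def inverse_matrices_def linear_poly_map_def
  by (rule exI[of _ A], rule exI[of _ B], rule exI[of _ "\<lambda>_. 0"]) (simp add: fun_eq_iff)

lemma subst_linear_poly_map_inverse: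
  assumes "inverse_matrices n A B" "vars_in {..<n} q"
  shows "subst (linear_poly_map n A) (subst (linear_poly_map n B) q) = q"
proof -
  have "subst (linear_poly_map n A) (linear_poly_map n B i) = Var i" if "i < n" for i
  proof -
    have "subst (linear_poly_map n A) (linear_poly_map n B i) =
        (\<Sum>j<n. Const (B i j) * (\<Sum>l<n. Const (A j l) * Var l))"
      using that by (simp add: linear_poly_map_def subst_sum subst_mult)
    also have "\<dots> = (\<Sum>l<n. Const (\<Sum>j<n. B i j * A j l) * Var l)"
      by (simp add: Const_sum sum_distrib_left sum_distrib_right Const_mult[symmetric] mult.assoc)
        (rule sum.swap)
    also have "\<dots> = (\<Sum>l<n. if l = i then Var l else 0)"
      using assms(1) that by (intro sum.cong) (auto simp: inverse_matrices_def)
    also have "\<dots> = Var i"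
      using that by simp
    finally show ?thesis .
  qed
  then show ?thesis
    unfolding subst_subst by (intro subst_eq_self[OF assms(2)]) simp
qed

lemma pderiv_subst_linear_poly_map:
  assumes "vars_in {..<n} q" "j < n"
  shows "pderiv_mp j (subst (linear_poly_map n B) q) =
    subst (linear_poly_map n B) (jac_apply n q (\<lambda>i. B i j))"
proof -
  have "pderiv_mp j (linear_poly_map n B i) = Const (B i j)" if "i < n" for i
    using that assms(2)
    by (simp add: linear_poly_map_def pderiv_sum pderiv_mult pderiv_Var Const_mult if_distrib cong: if_cong)
  then show ?thesis
    by (simp add: pderiv_subst[OF assms(1)] jac_apply_def subst_sum subst_mult mult.commute)
qed

lemma subst_linear_poly_map_affine:
  assumes "0 < n"
  obtains r where "vars_in {1..<n} r"
    and "subst (linear_poly_map n B) (Const c + (\<Sum>i<n. Const (a i) * Var i)) =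
      Const (\<Sum>i<n. a i * B i 0) * Var 0 + r"
proof
  define R where "R i = (\<Sum>j\<in>{1..<n}. Const (B i j) * Var j)" for i
  have "linear_poly_map n B i = Const (B i 0) * Var 0 + R i" if "i < n" for i
    using that assms
    by (simp add: linear_poly_map_def R_def atLeast0LessThan[symmetric] sum.atLeast_Suc_lessThan)
  then show "subst (linear_poly_map n B) (Const c + (\<Sum>i<n. Const (a i) * Var i)) =
      Const (\<Sum>i<n. a i * B i 0) * Var 0 + (Const c + (\<Sum>i<n. Const (a i) * R i))"
    by (simp add: subst_add subst_sum subst_mult distrib_left sum.distrib Const_sum sum_distrib_left
        sum_distrib_right Const_mult[symmetric] algebra_simps)
  show "vars_in {1..<n} (Const c + (\<Sum>i<n. Const (a i) * R i))"
    unfolding R_def by (intro vars_in_add vars_in_sum vars_in_mult vars_in_Const vars_in_Var) auto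
qed

lemma vars_in_subst_linear_poly_map_if_jac_apply_eq_0:
  fixes h :: "'a::field_char_0 mpoly"
  assumes "0 < n" "vars_in {..<n} h" "jac_apply n h (\<lambda>i. B i 0) = 0"
  shows "vars_in {1..<n} (subst (linear_poly_map n B) h)"
proof -
  have "vars_in {..<n} (subst (linear_poly_map n B) h)"
    using assms(2) by (rule vars_in_subst)
      (auto simp: linear_poly_map_def intro!: vars_in_sum vars_in_mult vars_in_Const vars_in_Var)
  moreover have "pderiv_mp 0 (subst (linear_poly_map n B) h) = 0"
    using assms by (simp add: pderiv_subst_linear_poly_map)
  ultimately have "vars_in ({..<n} - {0}) (subst (linear_poly_map n B) h)"
    by (rule vars_in_Diff_if_pderiv_eq_0)
  then show ?thesis
    by (rule vars_in_mono) auto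
qed

text \<open>The columns of \<open>first_column_completion w k\<close> are \<open>w\<close> and the unit vectors
\<open>e\<^sub>1, \<dots>, e\<^sub>n\<^sub>-\<^sub>1\<close> with \<open>e\<^sub>k\<close> replaced by \<open>e\<^sub>0\<close>; it is invertible whenever
\<open>w\<^sub>k \<noteq> 0\<close>.\<close>

definition first_column_completion :: "(nat \<Rightarrow> 'a::field) \<Rightarrow> nat \<Rightarrow> nat \<Rightarrow> nat \<Rightarrow> 'a" where
  "first_column_completion w k i j =
    (if j = 0 then w i else if j = Transposition.transpose 0 k i then 1 else 0)"

definition first_column_completion_inv :: "(nat \<Rightarrow> 'a::field) \<Rightarrow> nat \<Rightarrow> nat \<Rightarrow> nat \<Rightarrow> 'a" where
  "first_column_completion_inv w k j i =
    (if j = 0 then (if i = k then 1 / w k else 0)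
     else (if i = Transposition.transpose 0 k j then 1 else 0) -
       (if i = k then w (Transposition.transpose 0 k j) / w k else 0))"

lemma first_column_completion_mult_inv:
  assumes "k < n" "w k \<noteq> 0" "i < n" "j < n"
  shows "(\<Sum>l<n. first_column_completion w k i l * first_column_completion_inv w k l j) =
    (if i = j then 1 else 0)"
proof -
  let ?t = "Transposition.transpose 0 k"
  let ?B = "first_column_completion w k" and ?A = "first_column_completion_inv w k"
  have "(\<Sum>l<n. ?B i l * ?A l j) = w i * ?A 0 j + (\<Sum>l\<in>{1..<n}. ?B i l * ?A l j)"
    using assms
    by (simp add: atLeast0LessThan[symmetric] sum.atLeast_Suc_lessThan first_column_completion_def)
  also have "(\<Sum>l\<in>{1..<n}. ?B i l * ?A l j) = (if i \<noteq> k then ?A (?t i) j else 0)"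
  proof -
    have "?t i \<in> {1..<n} \<longleftrightarrow> i \<noteq> k"
      using assms by (auto simp: Transposition.transpose_def)
    then show ?thesis
      by (simp add: first_column_completion_def if_distrib[of "\<lambda>x. x * _"]
          sum.delta[OF finite_atLeastLessThan] cong: if_cong)
  qed
  finally show ?thesis
    using assms by (auto simp: first_column_completion_inv_def transpose_eq_iff field_simps)
qed

lemma first_column_completion_inv_mult:
  assumes "k < n" "w k \<noteq> 0" "j < n" "i < n"
  shows "(\<Sum>l<n. first_column_completion_inv w k j l * first_column_completion w k l i) =
    (if j = i then 1 else 0)"
proof -
  let ?t = "Transposition.transpose 0 k"
  let ?B = "first_column_completion w k" and ?A = "first_column_completion_inv w k"
  have "?t j < n"
    using assms by (auto simp: Transposition.transpose_def)
  then have "(\<Sum>l<n. ?A j l * ?B l i) =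
      (if j = 0 then ?B k i / w k else ?B (?t j) i - w (?t j) / w k * ?B k i)"
    using assms
    by (simp add: first_column_completion_inv_def left_diff_distrib if_distrib[of "\<lambda>x. x * _"]
        sum_subtractf cong: if_cong)
  then show ?thesis
    using assms by (auto simp: first_column_completion_def transpose_eq_iff)
qed

lemma exists_inverse_matrices_first_column:
  fixes w :: "nat \<Rightarrow> 'a::field"
  assumes "k < n" "w k \<noteq> 0"
  obtains A B where "inverse_matrices n A B" "\<And>i. i < n \<Longrightarrow> B i 0 = w i"
proof (rule that)
  show "inverse_matrices n (first_column_completion_inv w k) (first_column_completion w k)"
    using first_column_completion_mult_inv[of k n w] first_column_completion_inv_mult[of k n w] assms
    by (simp add: inverse_matrices_def)
qed (simp add: first_column_completion_def)

lemma tame_coordinate_if_linear_subst_eq_elementary: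
  assumes "0 < n" "inverse_matrices n A B" "vars_in {..<n} f" "vars_in {1..<n} p"
    and "subst (linear_poly_map n B) f = Var 0 + p"
  shows "tame_coordinate n f"
proof -
  define E where "E = (\<lambda>i. if i = 0 then Var 0 + p else Var i)"
  have "elementary_aut n E"
    unfolding elementary_aut_def E_def using assms(1,4) by blast
  moreover have "affine_aut n (linear_poly_map n A)"
    using assms(2) by (rule affine_aut_linear_poly_map)
  ultimately have "tame_aut n (comp_map n E (linear_poly_map n A))"
    by (intro tame_aut.comp) (auto intro: tame_aut.intros)
  moreover have "comp_map n E (linear_poly_map n A) 0 = f"
    using assms subst_linear_poly_map_inverse[OF assms(2,3)] by (simp add: comp_map_def E_def)
  ultimately show ?thesis
    unfolding tame_coordinate_def using assms(1) by blast
qed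

theorem proposition5p6:
  fixes f h :: "'a::field_char_0 mpoly" and n :: nat and v :: "nat \<Rightarrow> 'a"
  assumes "vars_in {..<n} f" and "vars_in {..<n} h"
    and "total_degree (f - h) = 1"
    and "jac_apply n h v = 0" and "jac_apply n f v \<noteq> 0"
  shows "tame_coordinate n f"
proof -
  obtain c a where d: "f - h = Const c + (\<Sum>i<n. Const (a i) * Var i)"
    using total_degree_le_1_imp_affine[OF vars_in_diff[OF assms(1,2)]] assms(3) by auto
  define s where "s = (\<Sum>i<n. a i * v i)"
  have "jac_apply n f v = jac_apply n h v + jac_apply n (f - h) v"
    by (simp flip: jac_apply_add)
  also have "\<dots> = Const s"
    using assms(4) by (simp add: d jac_apply_affine s_def)
  finally have "s \<noteq> 0"
    using assms(5) by auto
  then obtain k where k: "k < n" "v k \<noteq> 0"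
    unfolding s_def by (metis (mono_tags) lessThan_iff mult_zero_right sum.neutral)
  obtain A B where AB: "inverse_matrices n A B" and B0: "\<And>i. i < n \<Longrightarrow> B i 0 = 1 / s * v i"
    using exists_inverse_matrices_first_column[of k n "\<lambda>i. 1 / s * v i"] k \<open>s \<noteq> 0\<close> by auto
  have "jac_apply n h (\<lambda>i. B i 0) = Const (1 / s) * jac_apply n h v"
    unfolding jac_apply_scale[symmetric] using B0 by (rule jac_apply_cong)
  then have h_free: "vars_in {1..<n} (subst (linear_poly_map n B) h)"
    using k assms(2,4) by (intro vars_in_subst_linear_poly_map_if_jac_apply_eq_0) auto
  obtain r where r: "vars_in {1..<n} r"
    and "subst (linear_poly_map n B) (f - h) = Const (\<Sum>i<n. a i * B i 0) * Var 0 + r"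
    using subst_linear_poly_map_affine[of n B c a] k unfolding d by auto
  moreover have "(\<Sum>i<n. a i * B i 0) = 1 / s * (\<Sum>i<n. a i * v i)"
    unfolding sum_distrib_left by (rule sum.cong) (simp_all add: B0)
  ultimately have "subst (linear_poly_map n B) f = Var 0 + (subst (linear_poly_map n B) h + r)"
    using \<open>s \<noteq> 0\<close> subst_add[of _ h "f - h"] by (simp flip: s_def)
  then show ?thesis
    using k
    by (intro tame_coordinate_if_linear_subst_eq_elementary[OF _ AB assms(1) vars_in_add[OF h_free r]]) auto
qed

end
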